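(* Let $G=(G^0,G^1,r,s)$ be a topological graph in which $G^0$ and $G^1$ are compact Hausdorff spaces and $r,s:G^1\to G^0$ are surjective local homeomorphisms. Then for each $n\in\mathbb{N}$ the sets $\{v\in G^0:|G^1v|=n\}$ and $\{v\in G^0:|vG^1|=n\}$ are compact open.
   Context: For $v\in G^0$, $G^1v:=s^{-1}(v)$ and $vG^1:=r^{-1}(v)$; $|\cdot|$ denotes cardinality. *)

theory Defs
  imports "HOL-Analysis.Analysis"
begin

definition local_homeomorphism :: "'a topology \<Rightarrow> 'b topology \<Rightarrow> ('a \<Rightarrow> 'b) \<Rightarrow> bool" where
  "local_homeomorphism X Y f \<longleftrightarrow>
     continuous_map X Y f \<and>
     (\<forall>x\<in>topspace X. \<exists>U. openin X U \<and> x \<in> U \<and> openin Y (f ` U) \<and>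
        homeomorphic_map (subtopology X U) (subtopology Y (f ` U)) f)"

text \<open>For v in G0, the set of edges with source v (G^1 v) and with range v (v G^1).\<close>
definition src_fibre :: "'e topology \<Rightarrow> ('e \<Rightarrow> 'v) \<Rightarrow> 'v \<Rightarrow> 'e set" where
  "src_fibre G1 s v = {e \<in> topspace G1. s e = v}"

definition rng_fibre :: "'e topology \<Rightarrow> ('e \<Rightarrow> 'v) \<Rightarrow> 'v \<Rightarrow> 'e set" where
  "rng_fibre G1 r v = {e \<in> topspace G1. r e = v}"

end

theory Submission
  imports Defs
begin

text \<open>A fibre of a local homeomorphism \<open>f\<close> is closed and discrete, hence finite when the
  domain is compact. Around a point \<open>y\<close>, separate the points of the fibre over \<open>y\<close> by disjoint
  open sets on which \<open>f\<close> is injective: the image of the compact complement of their union is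
  closed and misses \<open>y\<close>, and \<open>f\<close> is open, so every fibre near \<open>y\<close> meets each of these sets
  exactly once. Thus the fibre cardinality is locally constant, its level sets are clopen, and
  closed subsets of a compact space are compact.\<close>

lemma local_homeomorphism_imp_continuous_map:
  "local_homeomorphism X Y f \<Longrightarrow> continuous_map X Y f"
  by (simp add: local_homeomorphism_def)

lemma local_homeomorphism_locally_injective:
  assumes "local_homeomorphism X Y f" "x \<in> topspace X"
  obtains W where "openin X W" "x \<in> W" "inj_on f W"
proof -
  obtain U where "openin X U" "x \<in> U"
    and hom: "homeomorphic_map (subtopology X U) (subtopology Y (f ` U)) f"
    using assms unfolding local_homeomorphism_def by blast
  moreover have "inj_on f U"
    using homeomorphic_imp_injective_map [OF hom] openin_subset [OF \<open>openin X U\<close>]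
    by (simp add: Int_absorb1)
  ultimately show thesis using that by blast
qed

lemma local_homeomorphism_imp_open_map:
  assumes "local_homeomorphism X Y f"
  shows "open_map X Y f"
  unfolding open_map_def
proof (intro allI impI)
  fix S assume S: "openin X S"
  show "openin Y (f ` S)"
  proof (subst openin_subopen, intro ballI)
    fix y assume "y \<in> f ` S"
    then obtain x where "x \<in> S" "y = f x" by blast
    then obtain U where U: "openin X U" "x \<in> U" "openin Y (f ` U)"
      and hom: "homeomorphic_map (subtopology X U) (subtopology Y (f ` U)) f"
      using assms openin_subset [OF S] unfolding local_homeomorphism_def by blast
    have "openin (subtopology X U) (S \<inter> U)"
      using S U(1) by (simp add: openin_open_subtopology openin_Int)
    then have "openin (subtopology Y (f ` U)) (f ` (S \<inter> U))"
      using homeomorphic_map_openness [OF hom, of "S \<inter> U"] openin_subset [OF U(1)]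
      by (simp add: Int_absorb1)
    then have "openin Y (f ` (S \<inter> U))"
      using U(3) by (simp add: openin_open_subtopology)
    then show "\<exists>T. openin Y T \<and> y \<in> T \<and> T \<subseteq> f ` S"
      using \<open>x \<in> S\<close> \<open>y = f x\<close> U(2) by blast
  qed
qed

lemma finite_fibre_local_homeomorphism:
  assumes "compact_space X" "t1_space Y" "local_homeomorphism X Y f"
  shows "finite {x \<in> topspace X. f x = y}"
proof (cases "y \<in> topspace Y")
  case False
  then have "{x \<in> topspace X. f x = y} = {}"
    using continuous_map_image_subset_topspace [OF local_homeomorphism_imp_continuous_map [OF assms(3)]]
    by blast
  then show ?thesis by (metis finite.emptyI)
next
  case True
  let ?F = "{x \<in> topspace X. f x = y}"
  have "closedin X ?F"
    using closedin_continuous_map_preimage [OF local_homeomorphism_imp_continuous_map [OF assms(3)]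
        closedin_t1_singleton [OF assms(2) True]]
    by simp
  then have "compactin X ?F"
    by (rule closedin_compact_space [OF assms(1)])
  moreover have "?F \<inter> X derived_set_of ?F = {}"
  proof (intro equals0I)
    fix x assume "x \<in> ?F \<inter> X derived_set_of ?F"
    then have "x \<in> ?F" "x \<in> X derived_set_of ?F" by auto
    obtain W where W: "openin X W" "x \<in> W" "inj_on f W"
      using local_homeomorphism_locally_injective [OF assms(3)] \<open>x \<in> ?F\<close> by blast
    then have "W \<inter> ?F \<subseteq> {x}"
      using \<open>x \<in> ?F\<close> by (auto dest: inj_onD)
    then show False
      using \<open>x \<in> X derived_set_of ?F\<close> W(1,2) unfolding in_derived_set_of by blast
  qed
  ultimately show ?thesis
    by (simp add: discrete_compactin_eq_finite)
qed

lemma Hausdorff_space_separate_finite: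
  assumes "Hausdorff_space X" "finite F" "F \<subseteq> topspace X"
  obtains U where "\<And>x. x \<in> F \<Longrightarrow> openin X (U x) \<and> x \<in> U x"
    and "\<And>x z. \<lbrakk>x \<in> F; z \<in> F; x \<noteq> z\<rbrakk> \<Longrightarrow> disjnt (U x) (U z)"
proof -
  have "\<exists>A B. openin X A \<and> openin X B \<and> x \<in> A \<and> F - {x} \<subseteq> B \<and> disjnt A B" if "x \<in> F" for x
  proof -
    have "compactin X {x}" "compactin X (F - {x})" "disjnt {x} (F - {x})"
      using assms(2,3) that by (auto simp: finite_imp_compactin_eq)
    then show ?thesis
      using Hausdorff_space_compact_separation [OF assms(1)] by (metis insert_subset)
  qed
  then obtain A B where AB: "\<And>x. x \<in> F \<Longrightarrow>
      openin X (A x) \<and> openin X (B x) \<and> x \<in> A x \<and> F - {x} \<subseteq> B x \<and> disjnt (A x) (B x)"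
    by metis
  define U where "U x = A x \<inter> \<Inter>(B ` (F - {x}))" for x
  show thesis
  proof
    show "openin X (U x) \<and> x \<in> U x" if "x \<in> F" for x
    proof
      show "openin X (U x)"
        unfolding U_def using AB assms(2) that by (intro openin_Int_Inter) auto
      show "x \<in> U x"
        unfolding U_def using AB that by blast
    qed
    show "disjnt (U x) (U z)" if "x \<in> F" "z \<in> F" "x \<noteq> z" for x z
    proof -
      have "U x \<subseteq> A x" "U z \<subseteq> B x"
        unfolding U_def using that by auto
      then show ?thesis
        using AB [OF \<open>x \<in> F\<close>] by (meson disjnt_subset1 disjnt_subset2)
    qed
  qed
qed

lemma card_eq_card_index_if_meets_each_once:
  assumes "finite I" "A \<subseteq> (\<Union>i\<in>I. U i)"
    and "\<And>i j. \<lbrakk>i \<in> I; j \<in> I; i \<noteq> j\<rbrakk> \<Longrightarrow> disjnt (U i) (U j)"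
    and "\<And>i. i \<in> I \<Longrightarrow> card (A \<inter> U i) = 1"
  shows "card A = card I"
proof -
  have "A = (\<Union>i\<in>I. A \<inter> U i)"
    using assms(2) by blast
  also have "card \<dots> = (\<Sum>i\<in>I. card (A \<inter> U i))"
    using assms by (intro card_UN_disjoint) (auto simp: disjnt_def intro: card_ge_0_finite)
  also have "\<dots> = card I"
    using assms(4) by simp
  finally show ?thesis .
qed

lemma card_fibre_locally_constant:
  assumes "compact_space X" "Hausdorff_space X" "Hausdorff_space Y"
    and lh: "local_homeomorphism X Y f" and y: "y \<in> topspace Y"
  obtains V where "openin Y V" "y \<in> V"
    "\<And>y'. y' \<in> V \<Longrightarrow> card {x \<in> topspace X. f x = y'} = card {x \<in> topspace X. f x = y}"
proof -
  define F where "F = {x \<in> topspace X. f x = y}"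
  have "finite F"
    unfolding F_def
    by (rule finite_fibre_local_homeomorphism [OF assms(1) Hausdorff_imp_t1_space [OF assms(3)] lh])
  have "\<exists>W. openin X W \<and> x \<in> W \<and> inj_on f W" if "x \<in> F" for x
    using local_homeomorphism_locally_injective [OF lh, of x] that unfolding F_def by blast
  then obtain W where W: "\<And>x. x \<in> F \<Longrightarrow> openin X (W x) \<and> x \<in> W x \<and> inj_on f (W x)"
    by metis
  obtain U0 where U0: "\<And>x. x \<in> F \<Longrightarrow> openin X (U0 x) \<and> x \<in> U0 x"
    and disj: "\<And>x z. \<lbrakk>x \<in> F; z \<in> F; x \<noteq> z\<rbrakk> \<Longrightarrow> disjnt (U0 x) (U0 z)"
    using Hausdorff_space_separate_finite [OF assms(2) \<open>finite F\<close>] unfolding F_def by blast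
  define U where "U x = U0 x \<inter> W x" for x
  have U: "openin X (U x)" "x \<in> U x" "inj_on f (U x)" if "x \<in> F" for x
    using U0 [OF that] W [OF that] unfolding U_def by (auto intro: inj_on_subset)
  \<comment> \<open>Points near \<open>y\<close> have all their preimages in \<open>\<Union>U\<close> (by compactness of the complement)
     and at least one preimage in each \<open>U x\<close> (as \<open>f\<close> is an open map).\<close>
  define K where "K = topspace X - (\<Union>x\<in>F. U x)"
  have "openin X (\<Union>x\<in>F. U x)"
    using U(1) by blast
  then have "compactin X K"
    unfolding K_def by (intro closedin_compact_space [OF assms(1)] closedin_diff) auto
  then have "closedin Y (f ` K)"
    by (rule compactin_imp_closedin [OF assms(3)
          image_compactin [OF _ local_homeomorphism_imp_continuous_map [OF lh]]])
  have fU: "openin Y (f ` U x)" if "x \<in> F" for x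
    using local_homeomorphism_imp_open_map [OF lh] U(1) [OF that] unfolding open_map_def by blast
  define V where "V = (topspace Y - f ` K) \<inter> \<Inter>((\<lambda>x. f ` U x) ` F)"
  show thesis
  proof
    show "openin Y V"
      unfolding V_def using \<open>finite F\<close> \<open>closedin Y (f ` K)\<close> fU
      by (intro openin_Int_Inter) auto
    show "y \<in> V"
      using y U(2) unfolding V_def K_def F_def by auto
    fix y' assume "y' \<in> V"
    let ?F' = "{x \<in> topspace X. f x = y'}"
    have "card ?F' = card F"
    proof (rule card_eq_card_index_if_meets_each_once [OF \<open>finite F\<close>])
      show "?F' \<subseteq> (\<Union>x\<in>F. U x)"
        using \<open>y' \<in> V\<close> unfolding V_def K_def by blast
      show "disjnt (U x) (U z)" if "x \<in> F" "z \<in> F" "x \<noteq> z" for x z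
        using disj [OF that] unfolding U_def disjnt_def by blast
      show "card (?F' \<inter> U x) = 1" if "x \<in> F" for x
      proof -
        have "y' \<in> f ` U x"
          using \<open>y' \<in> V\<close> that unfolding V_def by (simp only: Int_iff Inter_iff) blast
        then obtain a where "a \<in> U x" "f a = y'"
          by (rule imageE) simp
        moreover have "U x \<subseteq> topspace X"
          using U(1) [OF that] by (rule openin_subset)
        ultimately have "?F' \<inter> U x = {a}"
          using U(3) [OF that] by (auto dest: inj_onD)
        then show ?thesis by simp
      qed
    qed
    then show "card ?F' = card {x \<in> topspace X. f x = y}"
      by (simp add: F_def)
  qed
qed

lemma openin_locally_constant_preimage:
  assumes "\<And>y. y \<in> topspace Y \<Longrightarrow> \<exists>V. openin Y V \<and> y \<in> V \<and> (\<forall>y'\<in>V. g y' = g y)"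
  shows "openin Y {y \<in> topspace Y. P (g y)}"
proof (subst openin_subopen, intro ballI)
  fix y assume y: "y \<in> {y \<in> topspace Y. P (g y)}"
  then obtain V where V: "openin Y V" "y \<in> V" "\<forall>y'\<in>V. g y' = g y"
    using assms by blast
  have "V \<subseteq> {y \<in> topspace Y. P (g y)}"
  proof
    fix y' assume "y' \<in> V"
    then have "y' \<in> topspace Y" "g y' = g y"
      using openin_subset [OF V(1)] V(3) by auto
    then show "y' \<in> {y \<in> topspace Y. P (g y)}"
      using y by simp
  qed
  then show "\<exists>T. openin Y T \<and> y \<in> T \<and> T \<subseteq> {y \<in> topspace Y. P (g y)}"
    using V(1,2) by blast
qed

lemma card_fibre_level_set_compact_open:
  fixes n :: nat
  assumes "compact_space X" "Hausdorff_space X" "compact_space Y" "Hausdorff_space Y"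
    and lh: "local_homeomorphism X Y f"
  defines "L \<equiv> {y \<in> topspace Y. finite {x \<in> topspace X. f x = y} \<and> card {x \<in> topspace X. f x = y} = n}"
  shows "compactin Y L \<and> openin Y L"
proof -
  let ?c = "\<lambda>y. card {x \<in> topspace X. f x = y}"
  have loc: "\<exists>V. openin Y V \<and> y \<in> V \<and> (\<forall>y'\<in>V. ?c y' = ?c y)" if "y \<in> topspace Y" for y
    using card_fibre_locally_constant [OF assms(1,2,4) lh that] by metis
  have L: "L = {y \<in> topspace Y. ?c y = n}"
    unfolding L_def
    using finite_fibre_local_homeomorphism [OF assms(1) Hausdorff_imp_t1_space [OF assms(4)] lh]
    by simp
  have "openin Y {y \<in> topspace Y. ?c y \<noteq> n}"
    by (rule openin_locally_constant_preimage [OF loc])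
  moreover have "topspace Y - L = {y \<in> topspace Y. ?c y \<noteq> n}"
    unfolding L by blast
  ultimately have "closedin Y L"
    unfolding closedin_def L by auto
  then have "compactin Y L"
    by (rule closedin_compact_space [OF assms(3)])
  moreover have "openin Y L"
    unfolding L by (rule openin_locally_constant_preimage [OF loc])
  ultimately show ?thesis ..
qed

theorem mainTheorem9:
  fixes G0 :: "'v topology" and G1 :: "'e topology" and r s :: "'e \<Rightarrow> 'v" and n :: nat
  assumes "compact_space G0" "Hausdorff_space G0"
    and "compact_space G1" "Hausdorff_space G1"
    and "local_homeomorphism G1 G0 r" "r ` topspace G1 = topspace G0"
    and "local_homeomorphism G1 G0 s" "s ` topspace G1 = topspace G0"
  shows "compactin G0 {v \<in> topspace G0. finite (src_fibre G1 s v) \<and> card (src_fibre G1 s v) = n}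
       \<and> openin G0 {v \<in> topspace G0. finite (src_fibre G1 s v) \<and> card (src_fibre G1 s v) = n}
       \<and> compactin G0 {v \<in> topspace G0. finite (rng_fibre G1 r v) \<and> card (rng_fibre G1 r v) = n}
       \<and> openin G0 {v \<in> topspace G0. finite (rng_fibre G1 r v) \<and> card (rng_fibre G1 r v) = n}"
  using card_fibre_level_set_compact_open [OF assms(3,4,1,2,7), of n]
    card_fibre_level_set_compact_open [OF assms(3,4,1,2,5), of n]
  unfolding src_fibre_def rng_fibre_def by blast

end
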